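(* For integers $r\ge1$, $n\ge0$, the set \[ S_n=\left\{\mathbf{a}\in\mathbb{Z}^r \;\middle|\; a_1\ge0,\ldots,a_r\ge0,\ \sum_{i=1}^r a_i\le n\right\} \] is integrally-poised for polynomials of degree $n$.
   Context: A numerical (integer-valued) polynomial is a polynomial $f\in\mathbb{Q}[x_1,\ldots,x_r]$ with $f(\mathbf{x})\in\mathbb{Z}$ for all $\mathbf{x}\in\mathbb{Z}^r$. A subset $S\subseteq\mathbb{Z}^r$ is integrally-poised for polynomials of degree $n$ if there exists a family of numerical polynomials $\{c_{\mathbf{a}}\}_{\mathbf{a}\in S}$ such that $f(\mathbf{x})=\sum_{\mathbf{a}\in S}c_{\mathbf{a}}(\mathbf{x})f(\mathbf{a})$ for all polynomials $f$ of degree $n$ and all $\mathbf{x}\in\mathbb{Z}^r$. *)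

theory Defs
  imports Complex_Main
begin

text \<open>Points of Z^r are represented as functions nat => int that vanish outside {0..<r}.\<close>
definition lattice :: "nat \<Rightarrow> (nat \<Rightarrow> int) set" where
  "lattice r = {x. \<forall>i\<ge>r. x i = 0}"

definition exps_upto :: "nat \<Rightarrow> nat \<Rightarrow> (nat \<Rightarrow> nat) set" where
  "exps_upto r n = {e. (\<forall>i\<ge>r. e i = 0) \<and> (\<Sum>i<r. e i) \<le> n}"

definition is_poly :: "nat \<Rightarrow> nat \<Rightarrow> ((nat \<Rightarrow> int) \<Rightarrow> rat) \<Rightarrow> bool" where
  "is_poly r n f \<longleftrightarrow> (\<exists>c :: (nat \<Rightarrow> nat) \<Rightarrow> rat.
      \<forall>x. f x = (\<Sum>e\<in>exps_upto r n. c e * (\<Prod>i<r. of_int (x i) ^ e i)))"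

definition numerical_poly :: "nat \<Rightarrow> ((nat \<Rightarrow> int) \<Rightarrow> rat) \<Rightarrow> bool" where
  "numerical_poly r f \<longleftrightarrow> (\<exists>d. is_poly r d f) \<and> (\<forall>x\<in>lattice r. f x \<in> \<int>)"

definition integrally_poised :: "nat \<Rightarrow> nat \<Rightarrow> (nat \<Rightarrow> int) set \<Rightarrow> bool" where
  "integrally_poised r n S \<longleftrightarrow> S \<subseteq> lattice r \<and>
     (\<exists>c :: (nat \<Rightarrow> int) \<Rightarrow> (nat \<Rightarrow> int) \<Rightarrow> rat.
        (\<forall>a\<in>S. numerical_poly r (c a)) \<and>
        (\<forall>f. is_poly r n f \<longrightarrow> (\<forall>x\<in>lattice r. f x = (\<Sum>a\<in>S. c a x * f a))))"

definition simplex_set :: "nat \<Rightarrow> nat \<Rightarrow> (nat \<Rightarrow> int) set" where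
  "simplex_set r n = {a \<in> lattice r. (\<forall>i<r. a i \<ge> 0) \<and> (\<Sum>i<r. a i) \<le> int n}"

end

theory Submission
  imports Defs "HOL-Library.FuncSet" "HOL-Combinatorics.Stirling"
begin

text \<open>
  The binomial products B_k(x) = \<Prod>_i (x_i choose k_i), |k| \<le> n, span the same space as the
  monomials of degree \<le> n (the change of basis is triangular in each variable) and are
  integer-valued on Z^r. Hence Newton's forward-difference formula
  f(x) = \<Sum>_k B_k(x) (\<Delta>^k f)(0) holds for every polynomial f of degree \<le> n, as it holds
  for each B_k. Since (\<Delta>^k f)(0) is an integer combination of the values f(a) at the points
  a \<le> k, all of which lie in the simplex, the coefficient of f(a) in this formula is an integer
  combination of the B_k, i.e. a numerical polynomial. Exactness on B_k reduces to the
  one-variable identity \<Sum>_t (-1)^(m-t) (m choose t) (t choose j) = [j = m].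
\<close>

definition in_span :: "('j \<Rightarrow> 'a \<Rightarrow> 'b::comm_semiring_1) \<Rightarrow> 'j set \<Rightarrow> ('a \<Rightarrow> 'b) \<Rightarrow> bool" where
  "in_span \<phi> I f \<longleftrightarrow> (\<exists>q. \<forall>x. f x = (\<Sum>j\<in>I. q j * \<phi> j x))"

lemma in_span_basis: "finite I \<Longrightarrow> j \<in> I \<Longrightarrow> in_span \<phi> I (\<phi> j)"
  unfolding in_span_def by (intro exI[of _ "\<lambda>i. of_bool (i = j)"]) (simp add: sum.delta')

lemma in_span_add:
  assumes "in_span \<phi> I f" and "in_span \<phi> I g"
  shows "in_span \<phi> I (\<lambda>x. f x + g x)"
proof -
  obtain p q where "\<And>x. f x = (\<Sum>j\<in>I. p j * \<phi> j x)" "\<And>x. g x = (\<Sum>j\<in>I. q j * \<phi> j x)"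
    using assms unfolding in_span_def by blast
  then show ?thesis unfolding in_span_def
    by (intro exI[of _ "\<lambda>j. p j + q j"]) (simp add: distrib_right sum.distrib)
qed

lemma in_span_scale:
  assumes "in_span \<phi> I f"
  shows "in_span \<phi> I (\<lambda>x. c * f x)"
proof -
  obtain q where "\<And>x. f x = (\<Sum>j\<in>I. q j * \<phi> j x)"
    using assms unfolding in_span_def by blast
  then show ?thesis unfolding in_span_def
    by (intro exI[of _ "\<lambda>j. c * q j"]) (simp add: sum_distrib_left mult.assoc)
qed

lemma in_span_sum:
  "finite A \<Longrightarrow> (\<And>a. a \<in> A \<Longrightarrow> in_span \<phi> I (f a)) \<Longrightarrow> in_span \<phi> I (\<lambda>x. \<Sum>a\<in>A. f a x)"
proof (induction A rule: finite_induct)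
  case empty
  show ?case unfolding in_span_def by (intro exI[of _ "\<lambda>_. 0"]) simp
next
  case (insert a A)
  then show ?case by (simp add: in_span_add)
qed

lemma in_span_trans:
  assumes "finite I" and "\<And>j. j \<in> I \<Longrightarrow> in_span \<psi> J (\<phi> j)" and "in_span \<phi> I f"
  shows "in_span \<psi> J f"
proof -
  obtain q where "\<And>x. f x = (\<Sum>j\<in>I. q j * \<phi> j x)"
    using assms(3) unfolding in_span_def by blast
  then have "f = (\<lambda>x. \<Sum>j\<in>I. q j * \<phi> j x)" by blast
  then show ?thesis using assms(1,2) by (simp add: in_span_sum in_span_scale)
qed

lemma in_span_mono: "finite J \<Longrightarrow> I \<subseteq> J \<Longrightarrow> in_span \<phi> I f \<Longrightarrow> in_span \<phi> J f"
  by (rule in_span_trans[of I]) (auto intro: in_span_basis finite_subset)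

lemma in_span_comp: "in_span \<phi> I f \<Longrightarrow> in_span (\<lambda>j x. \<phi> j (h x)) I (\<lambda>x. f (h x))"
  unfolding in_span_def by blast

section \<open>Binomial coefficients in one variable\<close>

lemma gbinomial_eq_sum_powers:
  "(x gchoose k :: 'a::field_char_0)
     = (\<Sum>m\<le>k. ((-1) ^ (k + m) * of_nat (stirling k m) / fact k) * x ^ m)"
proof -
  have "x gchoose k = (-1) ^ k * pochhammer (-x) k / fact k"
    by (rule gbinomial_pochhammer)
  also have "\<dots> = (-1) ^ k * (\<Sum>m\<le>k. of_nat (stirling k m) * (-x) ^ m) / fact k"
    by (simp only: stirling_pochhammer)
  also have "\<dots> = (\<Sum>m\<le>k. ((-1) ^ (k + m) * of_nat (stirling k m) / fact k) * x ^ m)"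
    unfolding sum_distrib_left sum_divide_distrib power_minus[of x] power_add
    by (simp add: ac_simps)
  finally show ?thesis .
qed

lemma gbinomial_in_span_powers:
  "in_span (\<lambda>m (x::'a::field_char_0). x ^ m) {..k} (\<lambda>x. x gchoose k)"
  unfolding in_span_def
  by (rule exI[of _ "\<lambda>m. (-1) ^ (k + m) * of_nat (stirling k m) / fact k"])
    (simp add: gbinomial_eq_sum_powers)

lemma power_in_span_gbinomial:
  "in_span (\<lambda>j (x::'a::field_char_0). x gchoose j) {..m} (\<lambda>x. x ^ m)"
proof (induction m)
  case 0
  show ?case using in_span_basis[of "{..0}" 0 "\<lambda>j (x::'a). x gchoose j"] by simp
next
  case (Suc m)
  then obtain q where q: "\<And>x::'a. x ^ m = (\<Sum>j\<le>m. q j * (x gchoose j))"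
    unfolding in_span_def by blast
  have "in_span (\<lambda>j (x::'a). x gchoose j) {..Suc m} (\<lambda>x. x * (x gchoose j))" if "j \<le> m" for j
  proof -
    have "in_span (\<lambda>j (x::'a). x gchoose j) {..Suc m}
        (\<lambda>x. of_nat j * (x gchoose j) + of_nat (Suc j) * (x gchoose Suc j))"
      using that by (intro in_span_add in_span_scale in_span_basis) auto
    then show ?thesis by (simp only: gbinomial_mult_1)
  qed
  then have "in_span (\<lambda>j (x::'a). x gchoose j) {..Suc m} (\<lambda>x. \<Sum>j\<le>m. q j * (x * (x gchoose j)))"
    by (intro in_span_sum in_span_scale) auto
  moreover have "(\<lambda>x::'a. x ^ Suc m) = (\<lambda>x. \<Sum>j\<le>m. q j * (x * (x gchoose j)))"
    by (simp only: power_Suc q sum_distrib_left mult.left_commute)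
  ultimately show ?case by (simp only:)
qed

lemma sum_alternating_choose_choose:
  "(\<Sum>t\<le>m. (-1) ^ (m - t) * of_nat (m choose t) * of_nat (t choose j) :: 'a::comm_ring_1)
     = of_bool (j = m)"
proof (cases "j \<le> m")
  case False
  then show ?thesis by (auto intro!: sum.neutral simp: binomial_eq_0)
next
  case True
  have "(\<Sum>t\<le>m. (-1) ^ (m - t) * of_nat (m choose t) * of_nat (t choose j) :: 'a)
      = (\<Sum>t\<in>{j..m}. (-1) ^ (m - t) * of_nat (m choose t) * of_nat (t choose j))"
    by (rule sum.mono_neutral_right) (auto simp: binomial_eq_0)
  also have "\<dots> = (\<Sum>t\<in>{j..m}.
      of_nat (m choose j) * ((-1) ^ (m - t) * of_nat ((m - j) choose (t - j))))"
  proof (rule sum.cong)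
    fix t assume "t \<in> {j..m}"
    then have "(m choose t) * (t choose j) = (m choose j) * ((m - j) choose (t - j))"
      by (intro choose_mult) auto
    then show "(-1) ^ (m - t) * of_nat (m choose t) * of_nat (t choose j)
        = of_nat (m choose j) * ((-1) ^ (m - t) * of_nat ((m - j) choose (t - j)) :: 'a)"
      by (metis (no_types) mult.assoc mult.left_commute of_nat_mult)
  qed simp
  also have "\<dots>
      = of_nat (m choose j) * (\<Sum>s\<le>m - j. (-1) ^ (m - j - s) * of_nat ((m - j) choose s))"
    using True by (simp add: sum_distrib_left sum.atLeastAtMost_shift_0 atLeast0AtMost)
  also have "\<dots> = of_nat (m choose j) * (1 + -1) ^ (m - j)"
    by (subst binomial_ring) (simp add: mult.commute)
  finally show ?thesis using True by (simp add: power_0_left)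
qed

text \<open>For e :: nat \<Rightarrow> nat, {..e} is the box {a. \<forall>i. a i \<le> e i} of the pointwise order.\<close>

lemma atMost_fun_eq_image_PiE:
  fixes e :: "nat \<Rightarrow> nat"
  assumes "\<forall>i\<ge>r. e i = 0"
  shows "{..e} = (\<lambda>g i. if i < r then g i else 0) ` (\<Pi>\<^sub>E i\<in>{..<r}. {..e i})"
proof (intro equalityI subsetI)
  fix a assume "a \<in> {..e}"
  then have le: "a i \<le> e i" for i by (simp add: le_fun_def)
  then have "a i = 0" if "\<not> i < r" for i
    using assms that by (metis le_zero_eq not_less)
  then have "a = (\<lambda>i. if i < r then restrict a {..<r} i else 0)"
    by auto
  moreover have "restrict a {..<r} \<in> (\<Pi>\<^sub>E i\<in>{..<r}. {..e i})"
    using le by simp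
  ultimately show "a \<in> (\<lambda>g i. if i < r then g i else 0) ` (\<Pi>\<^sub>E i\<in>{..<r}. {..e i})"
    by (rule image_eqI)
next
  fix a assume "a \<in> (\<lambda>g i. if i < r then g i else 0) ` (\<Pi>\<^sub>E i\<in>{..<r}. {..e i})"
  then obtain g where g: "g \<in> (\<Pi>\<^sub>E i\<in>{..<r}. {..e i})" and a: "a = (\<lambda>i. if i < r then g i else 0)"
    by blast
  have "a i \<le> e i" for i
    using PiE_mem[OF g, of i] by (simp add: a)
  then show "a \<in> {..e}" by (simp add: le_fun_def)
qed

lemma inj_on_extend_by_zero: "inj_on (\<lambda>g i. if i < r then g i else 0) (\<Pi>\<^sub>E i\<in>{..<r}. B i)"
proof (rule inj_onI)
  fix g h assume g: "g \<in> (\<Pi>\<^sub>E i\<in>{..<r}. B i)" and h: "h \<in> (\<Pi>\<^sub>E i\<in>{..<r}. B i)"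
    and eq: "(\<lambda>i. if i < r then g i else 0) = (\<lambda>i. if i < r then h i else 0)"
  show "g = h"
  proof (rule PiE_ext[OF g h])
    fix i assume "i \<in> {..<r}"
    then show "g i = h i" using fun_cong[OF eq, of i] by simp
  qed
qed

lemma finite_atMost_fun: "\<forall>i\<ge>r. e i = 0 \<Longrightarrow> finite {..e :: nat \<Rightarrow> nat}"
  by (simp add: atMost_fun_eq_image_PiE finite_PiE)

lemma prod_sum_atMost_fun:
  fixes e :: "nat \<Rightarrow> nat" and g :: "nat \<Rightarrow> nat \<Rightarrow> 'b::comm_semiring_1"
  assumes "\<forall>i\<ge>r. e i = 0"
  shows "(\<Prod>i<r. \<Sum>j\<le>e i. g i j) = (\<Sum>a\<in>{..e}. \<Prod>i<r. g i (a i))"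
proof -
  have "(\<Prod>i<r. \<Sum>j\<le>e i. g i j) = (\<Sum>h\<in>(\<Pi>\<^sub>E i\<in>{..<r}. {..e i}). \<Prod>i<r. g i (h i))"
    by (rule prod_sum_PiE) auto
  also have "\<dots> = (\<Sum>a\<in>{..e}. \<Prod>i<r. g i (a i))"
    unfolding atMost_fun_eq_image_PiE[OF assms] sum.reindex[OF inj_on_extend_by_zero]
    by (auto intro!: sum.cong prod.cong)
  finally show ?thesis .
qed

lemma in_span_prod:
  fixes e :: "nat \<Rightarrow> nat"
  assumes "\<forall>i\<ge>r. e i = 0" and "\<And>i. i < r \<Longrightarrow> in_span \<phi> {..e i} (g i)"
  shows "in_span (\<lambda>a x. \<Prod>i<r. \<phi> (a i) (x i)) {..e} (\<lambda>x. \<Prod>i<r. g i (x i))"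
proof -
  obtain Q where Q: "\<And>i z. i < r \<Longrightarrow> g i z = (\<Sum>j\<le>e i. Q i j * \<phi> j z)"
    using assms(2) unfolding in_span_def by metis
  have expand:
    "(\<Prod>i<r. g i (x i)) = (\<Sum>a\<in>{..e}. (\<Prod>i<r. Q i (a i)) * (\<Prod>i<r. \<phi> (a i) (x i)))" for x
  proof -
    have "(\<Prod>i<r. g i (x i)) = (\<Prod>i<r. \<Sum>j\<le>e i. Q i j * \<phi> j (x i))"
      by (rule prod.cong) (simp_all add: Q)
    also have "\<dots> = (\<Sum>a\<in>{..e}. \<Prod>i<r. Q i (a i) * \<phi> (a i) (x i))"
      by (rule prod_sum_atMost_fun[OF assms(1)])
    finally show ?thesis by (simp add: prod.distrib)
  qed
  show ?thesis
    unfolding in_span_def by (intro exI[of _ "\<lambda>a. \<Prod>i<r. Q i (a i)"] allI) (rule expand)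
qed

section \<open>The binomial basis in r variables\<close>

definition monomial_fun :: "nat \<Rightarrow> (nat \<Rightarrow> nat) \<Rightarrow> (nat \<Rightarrow> int) \<Rightarrow> rat" where
  "monomial_fun r e x = (\<Prod>i<r. of_int (x i) ^ e i)"

definition binomial_fun :: "nat \<Rightarrow> (nat \<Rightarrow> nat) \<Rightarrow> (nat \<Rightarrow> int) \<Rightarrow> rat" where
  "binomial_fun r k x = (\<Prod>i<r. of_int (x i) gchoose k i)"

lemma exps_upto_vanishes: "e \<in> exps_upto r n \<Longrightarrow> \<forall>i\<ge>r. e i = 0"
  unfolding exps_upto_def by blast

lemma atMost_subset_exps_upto:
  assumes "e \<in> exps_upto r n"
  shows "{..e} \<subseteq> exps_upto r n"
proof
  fix a assume "a \<in> {..e}"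
  then have le: "a i \<le> e i" for i by (simp add: le_fun_def)
  then have "\<forall>i\<ge>r. a i = 0"
    using exps_upto_vanishes[OF assms] by (metis le_zero_eq)
  moreover have "(\<Sum>i<r. a i) \<le> (\<Sum>i<r. e i)"
    by (rule sum_mono) (rule le)
  ultimately show "a \<in> exps_upto r n"
    using assms unfolding exps_upto_def by simp
qed

lemma finite_exps_upto: "finite (exps_upto r n)"
proof (rule finite_subset)
  show "exps_upto r n \<subseteq> {..(\<lambda>i. if i < r then n else 0)}"
  proof
    fix e assume e: "e \<in> exps_upto r n"
    have "e i \<le> n" if "i < r" for i
      using e member_le_sum[of i "{..<r}" e] that unfolding exps_upto_def by simp
    then show "e \<in> {..(\<lambda>i. if i < r then n else 0)}"
      using e unfolding exps_upto_def by (simp add: le_fun_def)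
  qed
  show "finite {..(\<lambda>i. if i < r then n else 0)}"
    by (rule finite_atMost_fun[of r]) simp
qed

lemma monomial_in_span_binomial:
  assumes "e \<in> exps_upto r n"
  shows "in_span (binomial_fun r) (exps_upto r n) (monomial_fun r e)"
proof (rule in_span_mono[OF finite_exps_upto atMost_subset_exps_upto[OF assms]])
  have "in_span (\<lambda>k x. \<Prod>i<r. (of_int (x i) :: rat) gchoose k i) {..e}
      (\<lambda>x. \<Prod>i<r. of_int (x i) ^ e i)"
    by (rule in_span_prod[OF exps_upto_vanishes[OF assms]])
      (rule in_span_comp[OF power_in_span_gbinomial])
  then show "in_span (binomial_fun r) {..e} (monomial_fun r e)"
    by (simp add: binomial_fun_def[abs_def] monomial_fun_def[abs_def])
qed

lemma binomial_in_span_monomial: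
  assumes "k \<in> exps_upto r n"
  shows "in_span (monomial_fun r) (exps_upto r n) (binomial_fun r k)"
proof (rule in_span_mono[OF finite_exps_upto atMost_subset_exps_upto[OF assms]])
  have "in_span (\<lambda>e x. \<Prod>i<r. (of_int (x i) :: rat) ^ e i) {..k}
      (\<lambda>x. \<Prod>i<r. of_int (x i) gchoose k i)"
    by (rule in_span_prod[OF exps_upto_vanishes[OF assms]])
      (rule in_span_comp[OF gbinomial_in_span_powers])
  then show "in_span (monomial_fun r) {..k} (binomial_fun r k)"
    by (simp add: binomial_fun_def[abs_def] monomial_fun_def[abs_def])
qed

lemma is_poly_iff_in_span_binomial:
  "is_poly r n f \<longleftrightarrow> in_span (binomial_fun r) (exps_upto r n) f"
proof -
  have "is_poly r n f \<longleftrightarrow> in_span (monomial_fun r) (exps_upto r n) f"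
    unfolding is_poly_def in_span_def monomial_fun_def ..
  then show ?thesis
    by (meson in_span_trans finite_exps_upto monomial_in_span_binomial binomial_in_span_monomial)
qed

section \<open>Newton interpolation on the simplex\<close>

text \<open>(\<Delta>^k f)(0) = (\<Sum>a \<le> k. diff_weight r k a * f a) for the forward differences \<Delta>_i.\<close>

definition diff_weight :: "nat \<Rightarrow> (nat \<Rightarrow> nat) \<Rightarrow> (nat \<Rightarrow> nat) \<Rightarrow> rat" where
  "diff_weight r k a = (\<Prod>i<r. (-1) ^ (k i - a i) * of_nat (k i choose a i))"

definition interp_coeff :: "nat \<Rightarrow> nat \<Rightarrow> (nat \<Rightarrow> nat) \<Rightarrow> (nat \<Rightarrow> int) \<Rightarrow> rat" where
  "interp_coeff r n a x = (\<Sum>k\<in>exps_upto r n. diff_weight r k a * binomial_fun r k x)"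

lemma binomial_fun_of_nat: "binomial_fun r k (int \<circ> a) = (\<Prod>i<r. of_nat (a i choose k i))"
  unfolding binomial_fun_def by (simp add: binomial_gbinomial)

lemma sum_diff_weight_binomial_fun:
  assumes k: "k \<in> exps_upto r n" and k': "k' \<in> exps_upto r n"
  shows "(\<Sum>a\<in>exps_upto r n. diff_weight r k a * binomial_fun r k' (int \<circ> a))
    = of_bool (k = k')"
proof -
  have "(\<Sum>a\<in>exps_upto r n. diff_weight r k a * binomial_fun r k' (int \<circ> a))
      = (\<Sum>a\<in>{..k}. diff_weight r k a * binomial_fun r k' (int \<circ> a))"
  proof (rule sum.mono_neutral_right[OF finite_exps_upto atMost_subset_exps_upto[OF k]],
      intro ballI)
    fix a assume "a \<in> exps_upto r n - {..k}"
    then have a: "a \<in> exps_upto r n" and "\<not> a \<le> k" by auto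
    then obtain i where "k i < a i"
      by (auto simp: le_fun_def not_le)
    moreover have "i < r"
      using exps_upto_vanishes[OF a] calculation by (metis not_less not_less_zero)
    ultimately have "diff_weight r k a = 0"
      unfolding diff_weight_def by (intro prod_zero) (auto simp: binomial_eq_0)
    then show "diff_weight r k a * binomial_fun r k' (int \<circ> a) = 0" by simp
  qed
  also have "\<dots> = (\<Sum>a\<in>{..k}. \<Prod>i<r.
      (-1) ^ (k i - a i) * of_nat (k i choose a i) * of_nat (a i choose k' i))"
    unfolding diff_weight_def binomial_fun_of_nat by (simp add: prod.distrib)
  also have "\<dots> = (\<Prod>i<r. \<Sum>t\<le>k i.
      (-1) ^ (k i - t) * of_nat (k i choose t) * of_nat (t choose k' i))"
    by (rule prod_sum_atMost_fun[OF exps_upto_vanishes[OF k], symmetric])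
  also have "\<dots> = (\<Prod>i<r. of_bool (k' i = k i))"
    by (simp add: sum_alternating_choose_choose)
  also have "\<dots> = of_bool (k = k')"
  proof -
    have "k = k' \<longleftrightarrow> (\<forall>i<r. k' i = k i)"
    proof
      assume agree: "\<forall>i<r. k' i = k i"
      show "k = k'"
      proof
        fix i show "k i = k' i"
          using agree exps_upto_vanishes[OF k] exps_upto_vanishes[OF k'] by (cases "i < r") auto
      qed
    qed simp
    then show ?thesis by (auto simp: prod_zero_iff)
  qed
  finally show ?thesis .
qed

lemma interp_coeff_reproduces_binomial_fun:
  assumes k': "k' \<in> exps_upto r n"
  shows "(\<Sum>a\<in>exps_upto r n. interp_coeff r n a x * binomial_fun r k' (int \<circ> a))
    = binomial_fun r k' x"
proof -
  have "(\<Sum>a\<in>exps_upto r n. interp_coeff r n a x * binomial_fun r k' (int \<circ> a))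
      = (\<Sum>k\<in>exps_upto r n. binomial_fun r k x *
           (\<Sum>a\<in>exps_upto r n. diff_weight r k a * binomial_fun r k' (int \<circ> a)))"
    unfolding interp_coeff_def sum_distrib_left sum_distrib_right
    by (subst sum.swap) (simp add: ac_simps)
  also have "\<dots> = (\<Sum>k\<in>exps_upto r n. binomial_fun r k x * of_bool (k = k'))"
    by (intro sum.cong refl) (simp add: sum_diff_weight_binomial_fun k')
  also have "\<dots> = binomial_fun r k' x"
    using k' finite_exps_upto by (simp add: sum.delta')
  finally show ?thesis .
qed

lemma interp_coeff_reproduces:
  assumes "in_span (binomial_fun r) (exps_upto r n) f"
  shows "(\<Sum>a\<in>exps_upto r n. interp_coeff r n a x * f (int \<circ> a)) = f x"
proof -
  obtain q where q: "\<And>y. f y = (\<Sum>k\<in>exps_upto r n. q k * binomial_fun r k y)"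
    using assms unfolding in_span_def by blast
  have "(\<Sum>a\<in>exps_upto r n. interp_coeff r n a x * f (int \<circ> a))
      = (\<Sum>k\<in>exps_upto r n. q k *
           (\<Sum>a\<in>exps_upto r n. interp_coeff r n a x * binomial_fun r k (int \<circ> a)))"
    unfolding q sum_distrib_left by (subst sum.swap) (simp add: ac_simps)
  also have "\<dots> = f x"
    unfolding q by (intro sum.cong refl) (simp add: interp_coeff_reproduces_binomial_fun)
  finally show ?thesis .
qed

lemma interp_coeff_Ints: "interp_coeff r n a x \<in> \<int>"
  unfolding interp_coeff_def diff_weight_def binomial_fun_def
  by (intro Ints_sum Ints_mult Ints_prod Ints_power Ints_minus Ints_1 Ints_of_nat)
    (simp flip: of_int_gbinomial)

lemma is_poly_interp_coeff: "is_poly r n (interp_coeff r n a)"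
  unfolding is_poly_iff_in_span_binomial interp_coeff_def
  by (intro in_span_sum in_span_scale in_span_basis finite_exps_upto)

lemma simplex_set_eq_image: "simplex_set r n = (\<lambda>a. int \<circ> a) ` exps_upto r n"
proof (intro equalityI subsetI)
  fix b assume b: "b \<in> simplex_set r n"
  then have nonneg: "b i \<ge> 0" for i
    unfolding simplex_set_def lattice_def by (cases "i < r") auto
  then have "b = int \<circ> (nat \<circ> b)" by (simp add: fun_eq_iff)
  moreover have "nat \<circ> b \<in> exps_upto r n"
  proof -
    have "int (\<Sum>i<r. nat (b i)) \<le> int n"
      using nonneg b unfolding simplex_set_def by simp
    then show ?thesis
      using b unfolding simplex_set_def lattice_def exps_upto_def by (simp only: of_nat_le_iff) simp
  qed
  ultimately show "b \<in> (\<lambda>a. int \<circ> a) ` exps_upto r n" by (rule image_eqI)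
next
  fix b assume "b \<in> (\<lambda>a. int \<circ> a) ` exps_upto r n"
  then show "b \<in> simplex_set r n"
    unfolding simplex_set_def lattice_def exps_upto_def by (auto simp flip: of_nat_sum)
qed

lemma sum_simplex_set: "(\<Sum>b\<in>simplex_set r n. g b) = (\<Sum>a\<in>exps_upto r n. g (int \<circ> a))"
proof -
  have "inj_on (\<lambda>a. int \<circ> a) (exps_upto r n)"
    by (rule inj_onI) (simp add: fun_eq_iff)
  then show ?thesis
    unfolding simplex_set_eq_image by (simp add: sum.reindex)
qed

theorem proposition3p3:
  fixes r n :: nat
  assumes "r \<ge> 1"
  shows "integrally_poised r n (simplex_set r n)"
  unfolding integrally_poised_def
proof (intro conjI exI[of _ "\<lambda>b. interp_coeff r n (nat \<circ> b)"] ballI allI impI)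
  show "simplex_set r n \<subseteq> lattice r"
    unfolding simplex_set_def by blast
next
  fix b
  show "numerical_poly r (interp_coeff r n (nat \<circ> b))"
    unfolding numerical_poly_def using is_poly_interp_coeff interp_coeff_Ints by blast
next
  fix f x assume "is_poly r n f"
  have "(\<Sum>b\<in>simplex_set r n. interp_coeff r n (nat \<circ> b) x * f b)
      = (\<Sum>a\<in>exps_upto r n. interp_coeff r n a x * f (int \<circ> a))"
    unfolding sum_simplex_set by (simp add: comp_def)
  also have "\<dots> = f x"
    using \<open>is_poly r n f\<close> by (simp add: interp_coeff_reproduces is_poly_iff_in_span_binomial)
  finally show "f x = (\<Sum>b\<in>simplex_set r n. interp_coeff r n (nat \<circ> b) x * f b)" ..
qed

end
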